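(* For all $(y_1,a_1),(y_2,a_2)\in(\mathcal{A}\sqcup\mathcal{B})\times\mathcal{A}$ and $\varepsilon_1,\varepsilon_2\in\{\pm1\}$, either $(y_1,a_1)=(y_2,a_2)$ and $\varepsilon_1=-\varepsilon_2$, or fewer than $\frac14 D_{\mathcal{A}}$ letters of $v(y_j,a_j)$ ($j=1,2$) are cancelled in the free reduction of the product $v(y_1,a_1)^{\varepsilon_1}v(y_2,a_2)^{\varepsilon_2}$. In particular, $S_{\mathcal{A}}=\{v(y,a):(y,a)\in(\mathcal{A}\sqcup\mathcal{B})\times\mathcal{A}\}$ is a basis of a free subgroup of $F(\mathcal{B})$.
   Context: Let $\mathcal{A}$ be a finite non-empty alphabet and $\mathcal{B}=\{b_1,b_2\}$ (disjoint from $\mathcal{A}$); $F(\mathcal{B})$ is the free group on $\mathcal{B}$. Let $D_{\mathcal{A}}=4|\mathcal{A}|(|\mathcal{A}|+2)$ and fix a bijection $\eta_{\mathcal{A}}:(\mathcal{A}\sqcup\mathcal{B})\times\mathcal{A}\to\{1,\dots,D_{\mathcal{A}}/4\}$. For $y\in\mathcal{A}\sqcup\mathcal{B}$ and $a\in\mathcal{A}$ set $k=\eta_{\mathcal{A}}(y,a)$ and $v(y,a)=b_1^k(b_2b_1)^{D_{\mathcal{A}}-2k}b_2^k\in F(\mathcal{B})$. *)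

theory Defs
  imports Main
begin

text \<open>Words in the free group F(B), B = {b1,b2}.  A letter is a pair (g, e) of a
generator g and a flag e; e = True means the inverse letter g^-1.
The generators are encoded by bool: b1 = False, b2 = True.\<close>

type_synonym 'g letter = "'g \<times> bool"
type_synonym 'g word = "'g letter list"

definition b1 :: bool where "b1 = False"
definition b2 :: bool where "b2 = True"

definition inv_letter :: "'g letter \<Rightarrow> 'g letter" where
  "inv_letter x = (fst x, \<not> snd x)"

definition inv_word :: "'g word \<Rightarrow> 'g word" where
  "inv_word w = rev (map inv_letter w)"

definition wpow :: "'g word \<Rightarrow> int \<Rightarrow> 'g word" where
  "wpow w eps = (if eps = 1 then w else inv_word w)"

fun red :: "'g word \<Rightarrow> 'g word" where
  "red [] = []"
| "red (x # xs) = (case red xs of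
       [] \<Rightarrow> [x]
     | y # ys \<Rightarrow> (if y = inv_letter x then ys else x # y # ys))"

text \<open>Number of letters of u (equivalently of w) cancelled in the free reduction
of the product u w of two freely reduced words u, w: the length of the longest
suffix of u that is the inverse of a prefix of w.\<close>
definition cancelled :: "'g word \<Rightarrow> 'g word \<Rightarrow> nat" where
  "cancelled u w = (GREATEST n. n \<le> length u \<and> n \<le> length w \<and>
                        drop (length u - n) u = inv_word (take n w))"

definition DA :: "'a set \<Rightarrow> nat" where
  "DA A = 4 * card A * (card A + 2)"

definition vword :: "'a set \<Rightarrow> (('a + bool) \<times> 'a \<Rightarrow> nat) \<Rightarrow> ('a + bool) \<Rightarrow> 'a \<Rightarrow> bool word" where
  "vword A eta y a = (let k = eta (y, a) in
      replicate k (b1, False)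
      @ concat (replicate (DA A - 2 * k) [(b2, False), (b1, False)])
      @ replicate k (b2, False))"

text \<open>S is a basis of a free subgroup of F(B): every nonempty freely reduced word
in S^{+-1} (no factor s^e immediately followed by s^-e) has nontrivial free
reduction in F(B).\<close>
definition free_basis :: "'g word set \<Rightarrow> bool" where
  "free_basis S \<longleftrightarrow>
     (\<forall>ws :: ('g word \<times> bool) list.
        ws \<noteq> [] \<and> set (map fst ws) \<subseteq> S \<and>
        (\<forall>i. Suc i < length ws \<longrightarrow>
             \<not> (fst (ws ! i) = fst (ws ! Suc i) \<and> snd (ws ! i) \<noteq> snd (ws ! Suc i)))
        \<longrightarrow> red (concat (map (\<lambda>(s, e). if e then inv_word s else s) ws)) \<noteq> [])"

end

theory Submission
  imports Defs
begin

text \<open>All letters of v(y,a) are positive, and v(y,a) begins with b1^k b2 and ends with b1 b2^k,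
where k = eta(y,a) differs for different (y,a). Hence v(y,a)^e v(z,b)^f cancels nothing when
e = f, and otherwise cancels a common prefix or a common suffix of v(y,a) and v(z,b), which is
shorter than max(k,k') \<le> D/4. Since every v(y,a) is longer than D/2, small cancellation gives
freeness: reducing a product of such words from the right, the reduced tail always begins with
all but fewer than D/4 letters of its first factor, so the product never reduces to the empty word.\<close>

definition reduced :: "'g word \<Rightarrow> bool" where
  "reduced w \<longleftrightarrow> successively (\<lambda>x y. y \<noteq> inv_letter x) w"

definition inv_if :: "bool \<Rightarrow> 'g word \<Rightarrow> 'g word" where
  "inv_if e w = (if e then inv_word w else w)"

definition cancels :: "'g word \<Rightarrow> 'g word \<Rightarrow> nat \<Rightarrow> bool" where
  "cancels u w n \<longleftrightarrow> n \<le> length u \<and> n \<le> length w \<and> take n (inv_word u) = take n w"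

lemma inv_letter_inv_letter [simp]: "inv_letter (inv_letter x) = x"
  by (simp add: inv_letter_def)

lemma inv_word_inv_word [simp]: "inv_word (inv_word w) = w"
  by (simp add: inv_word_def rev_map o_def)

lemma inv_word_eq_iff [simp]: "inv_word u = inv_word w \<longleftrightarrow> u = w"
  by (metis inv_word_inv_word)

lemma inv_word_eq_Nil_iff [simp]: "inv_word w = [] \<longleftrightarrow> w = []"
  by (simp add: inv_word_def)

lemma length_inv_word [simp]: "length (inv_word w) = length w"
  by (simp add: inv_word_def)

lemma inv_word_Cons [simp]: "inv_word (x # w) = inv_word w @ [inv_letter x]"
  by (simp add: inv_word_def)

lemma set_inv_word: "set (inv_word w) = inv_letter ` set w"
  by (simp add: inv_word_def)

lemma inv_word_take: "inv_word (take n (inv_word u)) = drop (length u - n) u"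
  by (simp add: inv_word_def take_rev drop_map rev_map[symmetric] o_def)

lemma reduced_Cons: "reduced (x # y # w) \<longleftrightarrow> y \<noteq> inv_letter x \<and> reduced (y # w)"
  by (simp add: reduced_def)

lemma reduced_inv_word: "reduced w \<Longrightarrow> reduced (inv_word w)"
  unfolding reduced_def inv_word_def
  by (simp add: successively_map) (erule successively_mono, auto)

lemma reduced_if_same_sign: "\<forall>x\<in>set w. snd x = e \<Longrightarrow> reduced w"
  by (induction w rule: induct_list012) (auto simp: reduced_def inv_letter_def)

lemma cancelled_eq_Greatest: "cancelled u w = (GREATEST n. cancels u w n)"
  unfolding cancelled_def cancels_def by (simp add: inv_word_take[symmetric])

lemma cancels_le_cancelled:
  assumes "cancels u w n" shows "n \<le> cancelled u w"
  unfolding cancelled_eq_Greatest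
  by (rule Greatest_le_nat[where b = "length u"]) (use assms in \<open>auto simp: cancels_def\<close>)

lemma cancels_cancelled: "cancels u w (cancelled u w)"
  unfolding cancelled_eq_Greatest
  by (rule GreatestI_nat[where k = 0 and b = "length u"]) (auto simp: cancels_def)

lemma cancels_mono:
  assumes "cancels u w n" "m \<le> n"
  shows "cancels u w m"
proof -
  have "take m (take n (inv_word u)) = take m (take n w)"
    using assms(1) by (simp add: cancels_def)
  then show ?thesis
    using assms by (simp add: cancels_def min_absorb1)
qed

lemma cancels_same_sign:
  assumes "\<forall>x\<in>set u. snd x = e" "\<forall>x\<in>set w. snd x = e" "cancels u w n"
  shows "n = 0"
proof (rule ccontr)
  assume "n \<noteq> 0"
  then have "u \<noteq> []" "w \<noteq> []" "hd (inv_word u) = hd w"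
    using assms(3) unfolding cancels_def by (auto dest: arg_cong[where f = hd])
  moreover have "hd (inv_word u) \<in> inv_letter ` set u"
    using \<open>u \<noteq> []\<close> hd_in_set[of "inv_word u"] by (simp add: set_inv_word)
  moreover have "snd (hd w) = e"
    using assms(2) \<open>w \<noteq> []\<close> by simp
  ultimately show False
    using assms(1) by (auto simp: inv_letter_def)
qed

lemma cancels_Cons: "cancels u w n \<Longrightarrow> cancels (x # u) w n"
  by (simp add: cancels_def)

lemma red_append_reduced:
  assumes "reduced u"
  shows "\<exists>c. cancels u (red w) c \<and> red (u @ w) = take (length u - c) u @ drop c (red w)"
  using assms
proof (induction u)
  case Nil
  show ?case by (rule exI[of _ 0]) (simp add: cancels_def)
next
  case (Cons x u)
  have "reduced u"
    using Cons.prems by (auto simp: reduced_def successively_Cons)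
  with Cons.IH obtain c where c: "cancels u (red w) c"
    and red_uw: "red (u @ w) = take (length u - c) u @ drop c (red w)" by blast
  have red_xuw: "red ((x # u) @ w) = (case red (u @ w) of [] \<Rightarrow> [x]
      | y # ys \<Rightarrow> if y = inv_letter x then ys else x # y # ys)" by simp
  have keep: "red ((x # u) @ w) = x # red (u @ w)" if "hd (red (u @ w)) \<noteq> inv_letter x"
    using that by (cases "red (u @ w)") (auto simp: red_xuw)
  have c_le: "c \<le> length u"
    using c by (simp add: cancels_def)
  consider (partial) "c < length u" | (full) "c = length u" "drop c (red w) = []"
    | (full_keep) "c = length u" "hd (drop c (red w)) \<noteq> inv_letter x" "drop c (red w) \<noteq> []"
    | (full_cancel) ys where "c = length u" "drop c (red w) = inv_letter x # ys"
    using c_le by (metis le_neq_implies_less list.collapse)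
  then show ?case
  proof cases
    case partial
    then have "hd (red (u @ w)) = hd u"
      by (auto simp: red_uw hd_append hd_take)
    also have "\<dots> \<noteq> inv_letter x"
      using partial Cons.prems by (cases u) (auto simp: reduced_Cons)
    finally have "hd (red (u @ w)) \<noteq> inv_letter x" .
    then have "red ((x # u) @ w) = x # red (u @ w)"
      by (rule keep)
    then show ?thesis
      using partial c by (intro exI[of _ c]) (simp add: red_uw Suc_diff_le cancels_Cons)
  next
    case full
    then show ?thesis
      using c by (intro exI[of _ c]) (simp add: red_xuw red_uw cancels_Cons)
  next
    case full_keep
    then have "red ((x # u) @ w) = x # red (u @ w)"
      by (intro keep) (simp add: red_uw)
    then show ?thesis
      using full_keep c by (intro exI[of _ c]) (simp add: red_uw cancels_Cons)
  next
    case full_cancel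
    have "take (Suc c) (red w) = take c (red w) @ [inv_letter x]"
      using full_cancel take_add[of c 1 "red w"] by simp
    moreover have "drop (Suc c) (red w) = ys"
      using full_cancel by (metis drop_Suc drop_drop list.sel(3) plus_1_eq_Suc tl_drop)
    moreover have "c < length (red w)"
      using full_cancel by (metis drop_all list.distinct(1) not_le_imp_less)
    ultimately have "cancels (x # u) (red w) (Suc c)"
      using c full_cancel by (simp add: cancels_def)
    moreover have "red ((x # u) @ w) = drop (Suc c) (red w)"
      using full_cancel \<open>drop (Suc c) (red w) = ys\<close> by (simp add: red_xuw red_uw)
    ultimately show ?thesis
      using full_cancel by (intro exI[of _ "Suc c"]) simp
  qed
qed

lemma red_reduced: "reduced w \<Longrightarrow> red w = w"
  using red_append_reduced[of w "[]"] by (auto simp: cancels_def)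

lemma red_concat_small_cancellation:
  assumes "ws \<noteq> []" "0 < q" "\<forall>w\<in>set ws. reduced w \<and> 2 * q \<le> length w"
    "successively (\<lambda>u w. cancelled u w < q) ws"
  shows "\<exists>c<q. \<exists>r. red (concat ws) = take (length (hd ws) - c) (hd ws) @ r"
  using assms
proof (induction ws rule: induct_list012)
  case (2 w)
  then show ?case by (auto simp: red_reduced)
next
  case (3 u w ws)
  let ?R = "red (w @ concat ws)"
  obtain c' r where c': "c' < q" and R: "?R = take (length w - c') w @ r"
    using "3.IH"(2) "3.prems" by auto
  obtain c where c: "cancels u ?R c"
    and red_uR: "red (u @ w @ concat ws) = take (length u - c) u @ drop c ?R"
    using red_append_reduced "3.prems"(3) by fastforce
  have short: "cancelled u w < q" and long: "2 * q \<le> length w"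
    using "3.prems" by auto
  have "c < q"
  proof (cases "c \<le> length w - c'")
    case True
    then have "cancels u w c"
      using c by (auto simp: cancels_def R)
    then show ?thesis
      using cancels_le_cancelled short by fastforce
  next
    case False
    \<comment> \<open>then u would cancel all of the surviving prefix of w, which is longer than q\<close>
    then have "cancels u ?R (length w - c')"
      using c cancels_mono by fastforce
    then have "cancels u w (length w - c')"
      by (auto simp: cancels_def R)
    then show ?thesis
      using cancels_le_cancelled short long c' by fastforce
  qed
  then show ?case
    using red_uR by auto
qed simp

lemma free_basis_if_small_cancellation:
  assumes "0 < q" and S: "\<forall>s\<in>S. reduced s \<and> 2 * q \<le> length s"
    and small: "\<And>s t e f. s \<in> S \<Longrightarrow> t \<in> S \<Longrightarrow> \<not> (s = t \<and> e \<noteq> f) \<Longrightarrow>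
      cancelled (inv_if e s) (inv_if f t) < q"
  shows "free_basis S"
  unfolding free_basis_def
proof (intro allI impI, elim conjE)
  fix ws :: "('a word \<times> bool) list"
  assume "ws \<noteq> []" and ws_S: "set (map fst ws) \<subseteq> S" and alternating:
    "\<forall>i. Suc i < length ws \<longrightarrow> \<not> (fst (ws ! i) = fst (ws ! Suc i) \<and> snd (ws ! i) \<noteq> snd (ws ! Suc i))"
  define W where "W = map (\<lambda>(s, e). inv_if e s) ws"
  have "W \<noteq> []"
    using \<open>ws \<noteq> []\<close> by (simp add: W_def)
  moreover have "\<forall>w\<in>set W. reduced w \<and> 2 * q \<le> length w"
    using ws_S S by (fastforce simp: W_def inv_if_def reduced_inv_word)
  moreover have "successively (\<lambda>u w. cancelled u w < q) W"
  proof -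
    have "successively (\<lambda>x y. \<not> (fst x = fst y \<and> snd x \<noteq> snd y)) ws"
      using alternating by (simp add: successively_conv_nth)
    then show ?thesis
      unfolding W_def successively_map
      by (rule successively_mono) (use ws_S in \<open>fastforce intro!: small\<close>)
  qed
  ultimately obtain c r where "c < q" "red (concat W) = take (length (hd W) - c) (hd W) @ r"
    using red_concat_small_cancellation \<open>0 < q\<close> by blast
  moreover have "2 * q \<le> length (hd W)"
    using \<open>\<forall>w\<in>set W. reduced w \<and> 2 * q \<le> length w\<close> \<open>W \<noteq> []\<close> by simp
  ultimately show "red (concat (map (\<lambda>(s, e). if e then inv_word s else s) ws)) \<noteq> []"
    by (auto simp: W_def inv_if_def[abs_def])
qed

definition v_word :: "nat \<Rightarrow> nat \<Rightarrow> bool word" where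
  "v_word D k = replicate k (b1, False) @ concat (replicate (D - 2 * k) [(b2, False), (b1, False)])
     @ replicate k (b2, False)"

lemma vword_eq_v_word: "vword A eta y a = v_word (DA A) (eta (y, a))"
  by (simp add: vword_def v_word_def Let_def)

lemma length_v_word: "length (v_word D k) = 2 * k + 2 * (D - 2 * k)"
  by (simp add: v_word_def length_concat sum_list_replicate)

lemma sign_inv_if_v_word: "x \<in> set (inv_if e (v_word D k)) \<Longrightarrow> snd x = e"
  by (cases e) (auto simp: v_word_def inv_if_def set_inv_word inv_letter_def split: if_splits)

lemma reduced_v_word: "reduced (v_word D k)"
  by (rule reduced_if_same_sign[where e = False])
    (use sign_inv_if_v_word[of _ False] in \<open>simp add: inv_if_def\<close>)

text \<open>Inverting v_word swaps b1 with b2 and flips all signs, so common suffixes of two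
  v-words are, up to this relabelling, common prefixes.\<close>

lemma inv_word_v_word: "inv_word (v_word D k) = map (\<lambda>(g, e). (\<not> g, \<not> e)) (v_word D k)"
  by (simp add: v_word_def inv_word_def rev_concat map_concat inv_letter_def b1_def b2_def)

lemma take_v_word_eq_imp_le:
  assumes "take n (v_word D k) = take n (v_word D l)" "k < l" "2 * k < D"
  shows "n \<le> k"
proof (rule ccontr)
  assume "\<not> n \<le> k"
  then have "v_word D k ! k = v_word D l ! k"
    using assms(1) by (metis not_le nth_take)
  moreover obtain m where "D - 2 * k = Suc m"
    using assms(3) by (metis Suc_pred zero_less_diff)
  then have "v_word D k ! k = (b2, False)"
    by (simp add: v_word_def nth_append)
  moreover have "v_word D l ! k = (b1, False)"
    using assms(2) by (simp add: v_word_def nth_append)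
  ultimately show False
    by (simp add: b1_def b2_def)
qed

lemma take_inv_word_v_word_eq_iff:
  "take n (inv_word (v_word D k)) = take n (inv_word (v_word D l)) \<longleftrightarrow>
   take n (v_word D k) = take n (v_word D l)"
proof -
  have "inj (\<lambda>(g, e). (\<not> g, \<not> e))"
    by (auto intro: injI)
  then show ?thesis
    by (simp add: inv_word_v_word take_map inj_map_eq_map)
qed

lemma cancels_v_word_opposite_signs:
  assumes "cancels (inv_if e (v_word D k)) (inv_if (\<not> e) (v_word D l)) n"
    and "k \<noteq> l" "2 * k < D" "2 * l < D"
  shows "n < max k l"
proof -
  have "take n (v_word D k) = take n (v_word D l)"
    using assms(1) by (cases e) (simp_all add: cancels_def inv_if_def take_inv_word_v_word_eq_iff)
  then show ?thesis
    using assms(2-4) take_v_word_eq_imp_le[of n D k l] take_v_word_eq_imp_le[of n D l k]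
    by (cases "k < l") auto
qed

lemma cancelled_v_word_less:
  assumes "0 < q" "2 * q < D" "k \<le> q" "l \<le> q" "\<not> (k = l \<and> e \<noteq> f)"
  shows "cancelled (inv_if e (v_word D k)) (inv_if f (v_word D l)) < q"
proof (cases "e = f")
  case True
  have "cancelled (inv_if e (v_word D k)) (inv_if f (v_word D l)) = 0"
    using sign_inv_if_v_word True by (intro cancels_same_sign[where e = e, OF _ _ cancels_cancelled]) auto
  then show ?thesis
    using \<open>0 < q\<close> by simp
next
  case False
  then have "f = (\<not> e)" "k \<noteq> l"
    using assms(5) by auto
  then have "cancelled (inv_if e (v_word D k)) (inv_if f (v_word D l)) < max k l"
    using assms(2-4) by (intro cancels_v_word_opposite_signs[where D = D and e = e]) (simp_all add: cancels_cancelled)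
  then show ?thesis
    using assms(3,4) by simp
qed

lemma free_basis_v_words:
  assumes "0 < q" "2 * q < D" "S \<subseteq> v_word D ` {..q}"
  shows "free_basis S"
proof (rule free_basis_if_small_cancellation[OF \<open>0 < q\<close>])
  show "\<forall>s\<in>S. reduced s \<and> 2 * q \<le> length s"
    using assms(2,3) by (auto simp: reduced_v_word length_v_word)
  show "cancelled (inv_if e s) (inv_if f t) < q"
    if "s \<in> S" "t \<in> S" "\<not> (s = t \<and> e \<noteq> f)" for s t e f
    using that assms by (auto intro!: cancelled_v_word_less)
qed

lemma wpow_eq_inv_if: "wpow w e = inv_if (e \<noteq> 1) w"
  by (simp add: wpow_def inv_if_def)

theorem lemma5p1:
  fixes A :: "'a set" and eta :: "('a + bool) \<times> 'a \<Rightarrow> nat"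
  assumes "finite A" and "A \<noteq> {}"
    and "bij_betw eta ((A <+> (UNIV :: bool set)) \<times> A) {1 .. DA A div 4}"
  shows "(\<forall>y1 a1 y2 a2 (e1::int) (e2::int).
            (y1, a1) \<in> (A <+> (UNIV :: bool set)) \<times> A \<longrightarrow>
            (y2, a2) \<in> (A <+> (UNIV :: bool set)) \<times> A \<longrightarrow>
            e1 \<in> {1, -1} \<longrightarrow> e2 \<in> {1, -1} \<longrightarrow>
            ((y1, a1) = (y2, a2) \<and> e1 = - e2) \<or>
            cancelled (wpow (vword A eta y1 a1) e1) (wpow (vword A eta y2 a2) e2) < DA A div 4)
       \<and> free_basis {vword A eta y a | y a. (y, a) \<in> (A <+> (UNIV :: bool set)) \<times> A}"
proof -
  let ?X = "(A <+> (UNIV :: bool set)) \<times> A"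
  have q: "0 < DA A div 4" "2 * (DA A div 4) < DA A"
    using assms(1,2) by (auto simp: DA_def card_gt_0_iff)
  have inj: "inj_on eta ?X" and eta_le: "\<And>x. x \<in> ?X \<Longrightarrow> eta x \<le> DA A div 4"
    using assms(3) by (auto simp: bij_betw_def)
  have "((y1, a1) = (y2, a2) \<and> e1 = - e2) \<or>
      cancelled (wpow (vword A eta y1 a1) e1) (wpow (vword A eta y2 a2) e2) < DA A div 4"
    if mem: "(y1, a1) \<in> ?X" "(y2, a2) \<in> ?X" and "e1 \<in> {1, -1}" "e2 \<in> {1, -1}"
    for y1 a1 y2 a2 and e1 e2 :: int
  proof -
    have "((y1, a1) = (y2, a2) \<and> e1 = - e2) \<or>
        \<not> (eta (y1, a1) = eta (y2, a2) \<and> (e1 \<noteq> 1) \<noteq> (e2 \<noteq> 1))"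
      using that inj_on_eq_iff[OF inj mem] by auto
    then show ?thesis
      using q eta_le mem by (auto simp: wpow_eq_inv_if vword_eq_v_word intro!: cancelled_v_word_less)
  qed
  moreover have "free_basis {vword A eta y a | y a. (y, a) \<in> ?X}"
    using q eta_le by (intro free_basis_v_words) (auto simp: vword_eq_v_word)
  ultimately show ?thesis
    by blast
qed

end
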